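(* Let $\{c_n\}_{n\ge1}$ be a real sequence, $\{d_{n+1}\}_{n\ge1}$ a positive chain sequence, and let $P_0(x)=1$, $P_1(x)=x-c_1$, $P_{n+1}(x)=(x-c_{n+1})P_n(x)-d_{n+1}(x^2+1)P_{n-1}(x)$ for $n\ge1$. Let $u_0(x)=1$, $u_n(x)=\dfrac{(-1)^n}{(x-i)^n\prod_{j=1}^n\sqrt{d_{j+1}}}P_n(x)$ for $n\ge1$, $\mathbf u_n(x)=[u_0(x),\dots,u_{n-1}(x)]^T$, and let $\mathbf B_n$ be the $n\times n$ real symmetric tridiagonal matrix with diagonal entries $1$ and $(\mathbf B_n)_{k,k+1}=(\mathbf B_n)_{k+1,k}=\sqrt{d_{k+1}}$, $k=1,\dots,n-1$. For real $x\ne y$ let \[ G_n(x,y)=\frac{P_n(x)P_{n-1}(y)-P_{n-1}(x)P_n(y)}{x-y},\qquad n\ge1, \] and let $\mathcal G_n(x)=P_n'(x)P_{n-1}(x)-P_{n-1}'(x)P_n(x)$. Then $G_1(x,y)=1$ and, for $n\ge2$ and real $x\neq y$, \[ \frac{G_n(x,y)}{(x-i)^{n-1}(y+i)^{n-1}d_2d_3\cdots d_n}=\mathbf u_n(y)^H\mathbf B_n\mathbf u_n(x). \] Moreover, for $n\ge2$ and all real $x$, \[ \frac{\mathcal G_n(x)}{(x^2+1)^{n-1}d_2d_3\cdots d_n}=\mathbf u_n(x)^H\mathbf B_n\mathbf u_n(x)>0 . \]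
   Context: A sequence $\{d_{n+1}\}_{n\ge1}$ is a positive chain sequence if there is a sequence $\{g_{n+1}\}_{n\ge0}$ with $0\le g_1<1$, $0<g_n<1$ for $n\ge2$, and $d_{n+1}=(1-g_n)g_{n+1}$ for $n\ge1$. $\mathbf v^H$ denotes the conjugate transpose. *)

theory Defs
  imports Complex_Main "HOL-Computational_Algebra.Polynomial" "Jordan_Normal_Form.Matrix"
begin

definition positive_chain_seq :: "(nat \<Rightarrow> real) \<Rightarrow> bool" where
  "positive_chain_seq d \<longleftrightarrow> (\<exists>g :: nat \<Rightarrow> real.
     0 \<le> g 1 \<and> g 1 < 1 \<and> (\<forall>n\<ge>2. 0 < g n \<and> g n < 1) \<and>
     (\<forall>n\<ge>1. d (n+1) = (1 - g n) * g (n+1)))"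

text \<open>The polynomials P_n (with c indexed from 1 and d from 2).\<close>
fun Ppoly :: "(nat \<Rightarrow> real) \<Rightarrow> (nat \<Rightarrow> real) \<Rightarrow> nat \<Rightarrow> real poly" where
  "Ppoly c d 0 = 1"
| "Ppoly c d (Suc 0) = [:- c 1, 1:]"
| "Ppoly c d (Suc (Suc n)) =
     [:- c (n+2), 1:] * Ppoly c d (Suc n) - Polynomial.smult (d (n+2)) ([:1, 0, 1:] * Ppoly c d n)"

definition uf :: "(nat \<Rightarrow> real) \<Rightarrow> (nat \<Rightarrow> real) \<Rightarrow> nat \<Rightarrow> real \<Rightarrow> complex" where
  "uf c d n x = (if n = 0 then 1 else
     (-1)^n / ((complex_of_real x - \<i>)^n * complex_of_real (\<Prod>j=1..n. sqrt (d (j+1))))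
       * complex_of_real (poly (Ppoly c d n) x))"

definition uvec :: "(nat \<Rightarrow> real) \<Rightarrow> (nat \<Rightarrow> real) \<Rightarrow> nat \<Rightarrow> real \<Rightarrow> complex vec" where
  "uvec c d n x = vec n (\<lambda>k. uf c d k x)"

text \<open>B_n with 0-based indices: row/column k here is k+1 in the paper,
  so (B_n)_{k+1,k+2} = sqrt(d_{k+2}).\<close>
definition Bmat :: "(nat \<Rightarrow> real) \<Rightarrow> nat \<Rightarrow> complex mat" where
  "Bmat d n = mat n n (\<lambda>(k, l).
     if k = l then 1
     else if l = k + 1 then complex_of_real (sqrt (d (k+2)))
     else if k = l + 1 then complex_of_real (sqrt (d (l+2)))
     else 0)"

definition Gfun :: "(nat \<Rightarrow> real) \<Rightarrow> (nat \<Rightarrow> real) \<Rightarrow> nat \<Rightarrow> real \<Rightarrow> real \<Rightarrow> real" where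
  "Gfun c d n x y = (poly (Ppoly c d n) x * poly (Ppoly c d (n-1)) y
      - poly (Ppoly c d (n-1)) x * poly (Ppoly c d n) y) / (x - y)"

definition Gcal :: "(nat \<Rightarrow> real) \<Rightarrow> (nat \<Rightarrow> real) \<Rightarrow> nat \<Rightarrow> real \<Rightarrow> real" where
  "Gcal c d n x = poly (pderiv (Ppoly c d n)) x * poly (Ppoly c d (n-1)) x
      - poly (pderiv (Ppoly c d (n-1))) x * poly (Ppoly c d n) x"

end

theory Submission
  imports Defs
begin

(* Adding one index to the tridiagonal form u_n(y)^H B_n u_n(x) adds three terms. Writing
   u_k(x) = P_k(x) / ((i - x)^k * sqrt d_2 ... sqrt d_(k+1)), they turn the form into
   H_(n+1) / ((x - i)(y + i))^n d_2 ... d_(n+1) as soon as H satisfies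
   H_(n+1) = d_(n+1) (x - i)(y + i) H_n + P_n(x) P_n(y) - d_(n+1) ((y + i) P_(n-1)(y) P_n(x)
   + (x - i) P_(n-1)(x) P_n(y)). The three-term recurrence for P_n gives this recurrence for
   the Christoffel-Darboux kernel G_n and for its confluent form, up to an imaginary part that
   vanishes by (x - y) G_n(x, y) = P_n(x) P_(n-1)(y) - P_(n-1)(x) P_n(y).
   Positivity on the diagonal: with d_(k+1) = (1 - g_k) g_(k+1), every step of the form
   completes the square |sqrt (1 - g_k) u_(k-1) + sqrt g_(k+1) u_k|^2, and u_0 = 1. *)

definition tridiag :: "(nat \<Rightarrow> 'a::zero_neq_one) \<Rightarrow> nat \<Rightarrow> nat \<Rightarrow> 'a" where
  "tridiag \<beta> k l =
     (if k = l then 1 else if l = k + 1 then \<beta> k else if k = l + 1 then \<beta> l else 0)"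

definition tridiag_form ::
    "(nat \<Rightarrow> 'a::comm_ring_1) \<Rightarrow> nat \<Rightarrow> (nat \<Rightarrow> 'a) \<Rightarrow> (nat \<Rightarrow> 'a) \<Rightarrow> 'a" where
  "tridiag_form \<beta> n f g = (\<Sum>k<n. \<Sum>l<n. f k * tridiag \<beta> k l * g l)"

lemma tridiag_form_Suc_0: "tridiag_form \<beta> (Suc 0) f g = f 0 * g 0"
  by (simp add: tridiag_form_def tridiag_def)

lemma tridiag_form_Suc:
  assumes "n \<ge> 1"
  shows "tridiag_form \<beta> (Suc n) f g
       = tridiag_form \<beta> n f g + f n * g n + \<beta> (n - 1) * (f (n - 1) * g n + f n * g (n - 1))"
proof -
  have col: "(\<Sum>k<n. f k * tridiag \<beta> k n * g n) = f (n - 1) * \<beta> (n - 1) * g n"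
    using assms by (subst sum.remove[of _ "n - 1"])
      (auto simp: tridiag_def split: if_splits intro!: sum.neutral)
  have row: "(\<Sum>l<n. f n * tridiag \<beta> n l * g l) = f n * \<beta> (n - 1) * g (n - 1)"
    using assms by (subst sum.remove[of _ "n - 1"])
      (auto simp: tridiag_def split: if_splits intro!: sum.neutral)
  have "tridiag_form \<beta> (Suc n) f g = tridiag_form \<beta> n f g
      + (\<Sum>k<n. f k * tridiag \<beta> k n * g n) + (\<Sum>l<n. f n * tridiag \<beta> n l * g l) + f n * g n"
    by (simp add: tridiag_form_def sum.distrib tridiag_def)
  then show ?thesis
    unfolding col row by (simp add: algebra_simps)
qed

definition Bform :: "(nat \<Rightarrow> real) \<Rightarrow> (nat \<Rightarrow> real) \<Rightarrow> nat \<Rightarrow> real \<Rightarrow> real \<Rightarrow> complex" where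
  "Bform c d n x y = tridiag_form (\<lambda>k. complex_of_real (sqrt (d (k + 2)))) n
     (\<lambda>k. cnj (uf c d k y)) (\<lambda>k. uf c d k x)"

lemma scalar_prod_Bmat_uvec:
  "conjugate (uvec c d n y) \<bullet> (Bmat d n *\<^sub>v uvec c d n x) = Bform c d n x y"
  unfolding scalar_prod_def uvec_def Bmat_def mult_mat_vec_def Bform_def tridiag_form_def
  by (auto simp: tridiag_def lessThan_atLeast0 sum_distrib_left mult.assoc intro!: sum.cong)

definition sqrt_dprod :: "(nat \<Rightarrow> real) \<Rightarrow> nat \<Rightarrow> real" where
  "sqrt_dprod d n = (\<Prod>j=1..n. sqrt (d (j + 1)))"

lemma sqrt_dprod_Suc: "sqrt_dprod d (Suc n) = sqrt_dprod d n * sqrt (d (n + 2))"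
  by (simp add: sqrt_dprod_def)

lemma sqrt_dprod_square:
  assumes "\<forall>k\<ge>2. d k \<ge> 0"
  shows "sqrt_dprod d n * sqrt_dprod d n = (\<Prod>j=2..Suc n. d j)"
proof -
  have "sqrt_dprod d n * sqrt_dprod d n = (\<Prod>j=1..n. d (j + 1))"
    unfolding sqrt_dprod_def prod.distrib[symmetric] using assms by (intro prod.cong) auto
  also have "\<dots> = (\<Prod>j=2..Suc n. d j)"
    by (simp add: prod.shift_bounds_cl_Suc_ivl[symmetric] numeral_2_eq_2)
  finally show ?thesis .
qed

text \<open>Absorbing the sign \<open>(-1)\<^sup>n\<close> into the base \<open>\<i> - x\<close> makes the recursion for
  \<^const>\<open>Bform\<close> sign-free.\<close>

lemma uf_eq:
  "uf c d n x = complex_of_real (poly (Ppoly c d n) x)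
     / ((\<i> - complex_of_real x) ^ n * complex_of_real (sqrt_dprod d n))"
proof -
  have sign: "(\<i> - complex_of_real x) ^ n = (-1) ^ n * (complex_of_real x - \<i>) ^ n"
    by (metis minus_diff_eq power_minus)
  have "(-1) ^ n * p / A = p / ((-1) ^ n * A)" for p A :: complex
    by (cases "A = 0") (simp_all add: field_simps flip: power_add)
  then show ?thesis
    unfolding uf_def sqrt_dprod_def sign by simp
qed

lemma cnj_uf_eq:
  "cnj (uf c d n y) = complex_of_real (poly (Ppoly c d n) y)
     / ((- \<i> - complex_of_real y) ^ n * complex_of_real (sqrt_dprod d n))"
  by (simp add: uf_eq)

text \<open>The imaginary part of \<open>(\<i> - x)(-\<i> - y) = (x y + 1) + \<i>(x - y)\<close> is absorbed by the
  Christoffel--Darboux relation \<open>(x - y) h\<^sub>0 = p\<^sub>1 q\<^sub>0 - p\<^sub>0 q\<^sub>1\<close>.\<close>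

lemma kernel_step_complex:
  fixes x y \<delta> h0 h1 p0 p1 q0 q1 :: real
  assumes CD: "(x - y) * h0 = p1 * q0 - p0 * q1"
    and rec: "h1 = \<delta> * (x * y + 1) * h0 + p1 * q1 - \<delta> * (y * q0 * p1 + x * p0 * q1)"
  shows "complex_of_real h1
    = \<delta> * ((\<i> - x) * (- \<i> - y)) * h0 + p1 * q1 + \<delta> * ((- \<i> - y) * q0 * p1 + (\<i> - x) * p0 * q1)"
proof (rule complex_eqI)
  show "Im h1 = Im (\<delta> * ((\<i> - x) * (- \<i> - y)) * h0 + p1 * q1
                   + \<delta> * ((- \<i> - y) * q0 * p1 + (\<i> - x) * p0 * q1))"
    using arg_cong[OF CD, of "\<lambda>t. \<delta> * t"] by (simp add: algebra_simps)
qed (simp add: rec algebra_simps)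

lemma Bform_kernel:
  fixes c d H :: "nat \<Rightarrow> real" and x y :: real
  defines "p \<equiv> \<lambda>k. poly (Ppoly c d k) x" and "q \<equiv> \<lambda>k. poly (Ppoly c d k) y"
  assumes dpos: "\<forall>k\<ge>2. d k > 0"
    and H_1: "H 1 = 1"
    and H_CD: "\<And>m. m \<ge> 1 \<Longrightarrow> (x - y) * H m = p m * q (m - 1) - p (m - 1) * q m"
    and H_Suc: "\<And>m. m \<ge> 1 \<Longrightarrow> H (Suc m) = d (m + 1) * (x * y + 1) * H m + p m * q m
                   - d (m + 1) * (y * q (m - 1) * p m + x * p (m - 1) * q m)"
  shows "Bform c d (Suc m) x y = complex_of_real (H (Suc m))
     / (((complex_of_real x - \<i>) * (complex_of_real y + \<i>)) ^ m
        * complex_of_real (\<Prod>j=2..Suc m. d j))"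
proof (induction m)
  case 0
  have "Bform c d 1 x y = 1"
    by (simp add: Bform_def tridiag_form_Suc_0 uf_def)
  then show ?case
    using H_1 by simp
next
  case (Suc m)
  define a where "a = \<i> - complex_of_real x"
  define b where "b = - \<i> - complex_of_real y"
  define s where "s = complex_of_real (sqrt_dprod d m)"
  define r where "r = complex_of_real (sqrt (d (m + 2)))"
  define D where "D = complex_of_real (\<Prod>j=2..Suc m. d j)"
  have ab: "(complex_of_real x - \<i>) * (complex_of_real y + \<i>) = a * b"
    by (simp add: a_def b_def algebra_simps)
  have "a \<noteq> 0" "b \<noteq> 0"
    by (simp_all add: a_def b_def complex_eq_iff)
  have "d (m + 2) > 0"
    using dpos by simp
  then have rr: "r * r = complex_of_real (d (m + 2))" and "r \<noteq> 0"
    by (simp_all add: r_def flip: of_real_mult)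
  have ss: "s * s = D"
    using sqrt_dprod_square[of d m] dpos by (simp add: s_def D_def less_imp_le flip: of_real_mult)
  have "(\<Prod>j=2..Suc m. d j) > 0"
    using dpos by (intro prod_pos) auto
  then have "s \<noteq> 0"
    using ss by (auto simp: D_def)
  have D_Suc: "complex_of_real (\<Prod>j=2..Suc (Suc m). d j) = D * (r * r)"
    by (simp add: D_def rr)
  have H_Suc_Suc: "complex_of_real (H (Suc (Suc m)))
      = r * r * (a * b) * H (Suc m) + p (Suc m) * q (Suc m)
        + r * r * (b * q m * p (Suc m) + a * p m * q (Suc m))"
    using kernel_step_complex[OF H_CD H_Suc, of "Suc m"] by (simp add: rr a_def b_def)
  have "Bform c d (Suc (Suc m)) x y = Bform c d (Suc m) x y
      + q (Suc m) / (b ^ Suc m * (s * r)) * (p (Suc m) / (a ^ Suc m * (s * r)))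
      + r * (q m / (b ^ m * s) * (p (Suc m) / (a ^ Suc m * (s * r)))
             + q (Suc m) / (b ^ Suc m * (s * r)) * (p m / (a ^ m * s)))"
    unfolding Bform_def
    by (simp add: tridiag_form_Suc uf_eq cnj_uf_eq sqrt_dprod_Suc a_def b_def s_def r_def p_def q_def)
  also have "\<dots> = complex_of_real (H (Suc (Suc m))) / ((a * b) ^ Suc m * (D * (r * r)))"
    unfolding Suc[unfolded ab D_def[symmetric]] H_Suc_Suc ss[symmetric]
    using \<open>a \<noteq> 0\<close> \<open>b \<noteq> 0\<close> \<open>s \<noteq> 0\<close> \<open>r \<noteq> 0\<close> by (simp add: field_simps)
  finally show ?case
    unfolding ab D_Suc .
qed

lemma poly_Ppoly_Suc_Suc:
  "poly (Ppoly c d (Suc (Suc m))) x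
     = (x - c (m + 2)) * poly (Ppoly c d (Suc m)) x - d (m + 2) * (x\<^sup>2 + 1) * poly (Ppoly c d m) x"
  by (simp add: algebra_simps power2_eq_square)

lemma Gfun_1: "x \<noteq> y \<Longrightarrow> Gfun c d 1 x y = 1"
  by (simp add: Gfun_def)

lemma Gfun_Suc_Suc:
  fixes c d :: "nat \<Rightarrow> real" and x y :: real
  defines "p \<equiv> \<lambda>k. poly (Ppoly c d k) x" and "q \<equiv> \<lambda>k. poly (Ppoly c d k) y"
  assumes "x \<noteq> y"
  shows "Gfun c d (Suc (Suc m)) x y = d (m + 2) * (x * y + 1) * Gfun c d (Suc m) x y
     + p (Suc m) * q (Suc m) - d (m + 2) * (y * q m * p (Suc m) + x * p m * q (Suc m))"
proof -
  have "Gfun c d (Suc (Suc m)) x y * (x - y)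
      = (d (m + 2) * (x * y + 1) * Gfun c d (Suc m) x y
         + p (Suc m) * q (Suc m) - d (m + 2) * (y * q m * p (Suc m) + x * p m * q (Suc m))) * (x - y)"
    using \<open>x \<noteq> y\<close>
    by (simp add: Gfun_def p_def q_def poly_Ppoly_Suc_Suc field_simps power2_eq_square del: Ppoly.simps)
  with \<open>x \<noteq> y\<close> show ?thesis
    by simp
qed

lemma Gcal_1: "Gcal c d 1 x = 1"
  by (simp add: Gcal_def pderiv_pCons)

lemma Gcal_Suc_Suc:
  fixes c d :: "nat \<Rightarrow> real" and x :: real
  defines "p \<equiv> \<lambda>k. poly (Ppoly c d k) x"
  shows "Gcal c d (Suc (Suc m)) x = d (m + 2) * (x\<^sup>2 + 1) * Gcal c d (Suc m) x
     + (p (Suc m))\<^sup>2 - 2 * x * d (m + 2) * p m * p (Suc m)"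
proof -
  have deriv: "poly (pderiv (Ppoly c d (Suc (Suc m)))) x = p (Suc m)
      + (x - c (m + 2)) * poly (pderiv (Ppoly c d (Suc m))) x
      - d (m + 2) * (2 * x * p m + (x\<^sup>2 + 1) * poly (pderiv (Ppoly c d m)) x)"
    unfolding p_def
    by (simp only: Ppoly.simps(3) pderiv_diff pderiv_mult pderiv_smult)
       (simp add: pderiv_pCons algebra_simps power2_eq_square)
  show ?thesis
    unfolding Gcal_def deriv
    by (simp add: p_def poly_Ppoly_Suc_Suc algebra_simps power2_eq_square del: Ppoly.simps)
qed

lemma Bform_Gfun:
  assumes "\<forall>k\<ge>2. d k > 0" and "x \<noteq> y"
  shows "Bform c d (Suc m) x y = complex_of_real (Gfun c d (Suc m) x y)
     / (((complex_of_real x - \<i>) * (complex_of_real y + \<i>)) ^ m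
        * complex_of_real (\<Prod>j=2..Suc m. d j))"
proof (rule Bform_kernel[OF assms(1)])
  show "Gfun c d 1 x y = 1"
    using \<open>x \<noteq> y\<close> by (rule Gfun_1)
  show "(x - y) * Gfun c d k x y
      = poly (Ppoly c d k) x * poly (Ppoly c d (k - 1)) y
        - poly (Ppoly c d (k - 1)) x * poly (Ppoly c d k) y" for k
    using \<open>x \<noteq> y\<close> by (simp add: Gfun_def)
  show "Gfun c d (Suc k) x y = d (k + 1) * (x * y + 1) * Gfun c d k x y
      + poly (Ppoly c d k) x * poly (Ppoly c d k) y
      - d (k + 1) * (y * poly (Ppoly c d (k - 1)) y * poly (Ppoly c d k) x
                     + x * poly (Ppoly c d (k - 1)) x * poly (Ppoly c d k) y)"
    if "k \<ge> 1" for k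
    using that Gfun_Suc_Suc[OF \<open>x \<noteq> y\<close>, where m = "k - 1"] by (simp del: Ppoly.simps)
qed

lemma Bform_Gcal:
  assumes "\<forall>k\<ge>2. d k > 0"
  shows "Bform c d (Suc m) x x = complex_of_real (Gcal c d (Suc m) x)
     / (((complex_of_real x - \<i>) * (complex_of_real x + \<i>)) ^ m
        * complex_of_real (\<Prod>j=2..Suc m. d j))"
proof (rule Bform_kernel[OF assms])
  show "Gcal c d 1 x = 1"
    by (rule Gcal_1)
  show "Gcal c d (Suc k) x = d (k + 1) * (x * x + 1) * Gcal c d k x
      + poly (Ppoly c d k) x * poly (Ppoly c d k) x
      - d (k + 1) * (x * poly (Ppoly c d (k - 1)) x * poly (Ppoly c d k) x
                     + x * poly (Ppoly c d (k - 1)) x * poly (Ppoly c d k) x)"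
    if "k \<ge> 1" for k
    using that Gcal_Suc_Suc[where c = c and d = d and x = x and m = "k - 1"]
    by (simp add: algebra_simps power2_eq_square del: Ppoly.simps)
qed simp

text \<open>Positive chain sequences make the Hermitian tridiagonal form positive: each step completes
  a square, \<open>Re Q\<^sub>n\<^sub>+\<^sub>2 - (1 - g\<^sub>n\<^sub>+\<^sub>1)|v|\<^sup>2 = (Re Q\<^sub>n\<^sub>+\<^sub>1 - (1 - g\<^sub>n)|u|\<^sup>2)
  + |\<surd>(1 - g\<^sub>n) u + \<surd>g\<^sub>n\<^sub>+\<^sub>1 v|\<^sup>2\<close>.\<close>

lemma tridiag_form_chain_lower_bound:
  fixes f :: "nat \<Rightarrow> complex" and g :: "nat \<Rightarrow> real"
  defines "Q \<equiv> \<lambda>n. tridiag_form (\<lambda>k. complex_of_real (sqrt ((1 - g k) * g (Suc k)))) n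
                   (\<lambda>k. cnj (f k)) f"
  assumes "0 \<le> g 0" and "g 0 < 1" and "\<forall>k\<ge>1. 0 < g k \<and> g k < 1" and "f 0 \<noteq> 0"
  shows "(1 - g n) * (cmod (f n))\<^sup>2 \<le> Re (Q (Suc n)) \<and> 0 < Re (Q (Suc n))"
proof (induction n)
  case 0
  have "Q (Suc 0) = cnj (f 0) * f 0"
    by (simp add: Q_def tridiag_form_Suc_0)
  also have "\<dots> = complex_of_real ((cmod (f 0))\<^sup>2)"
    by (metis complex_norm_square mult.commute)
  finally show ?case
    using assms(2-3,5) by (simp add: mult_le_cancel_right2)
next
  case (Suc n)
  define u where "u = f n"
  define v where "v = f (Suc n)"
  define \<alpha> where "\<alpha> = sqrt (1 - g n)"
  define \<beta> where "\<beta> = sqrt (g (Suc n))"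
  have "0 \<le> g n \<and> g n < 1"
    using assms(2,3) assms(4)[rule_format, of n] by (cases "n = 0") auto
  then have g_n: "0 \<le> g n" "g n < 1"
    by auto
  have g_Suc: "0 < g (Suc n)" "g (Suc n) < 1"
    using assms(4) by auto
  have \<alpha>2: "\<alpha>\<^sup>2 = 1 - g n" and \<beta>2: "\<beta>\<^sup>2 = g (Suc n)"
    using g_n g_Suc by (simp_all add: \<alpha>_def \<beta>_def)
  have ReQ: "Re (Q (Suc (Suc n)))
      = Re (Q (Suc n)) + (cmod v)\<^sup>2 + \<alpha> * \<beta> * Re (cnj u * v + cnj v * u)"
    unfolding cmod_power2
    by (simp add: Q_def tridiag_form_Suc u_def v_def \<alpha>_def \<beta>_def real_sqrt_mult power2_eq_square)
  have square: "(cmod (\<alpha> * u + \<beta> * v))\<^sup>2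
      = \<alpha>\<^sup>2 * (cmod u)\<^sup>2 + \<beta>\<^sup>2 * (cmod v)\<^sup>2 + \<alpha> * \<beta> * Re (cnj u * v + cnj v * u)"
    unfolding cmod_power2 by (simp add: power2_eq_square algebra_simps)
  have completed: "Re (Q (Suc (Suc n))) - (1 - g (Suc n)) * (cmod v)\<^sup>2
      = (Re (Q (Suc n)) - (1 - g n) * (cmod u)\<^sup>2) + (cmod (\<alpha> * u + \<beta> * v))\<^sup>2"
    unfolding ReQ square \<alpha>2 \<beta>2 by (simp add: algebra_simps)
  have IH: "(1 - g n) * (cmod u)\<^sup>2 \<le> Re (Q (Suc n))" "0 < Re (Q (Suc n))"
    using Suc by (simp_all add: u_def)
  have lower: "(1 - g (Suc n)) * (cmod v)\<^sup>2 \<le> Re (Q (Suc (Suc n)))"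
    using completed IH(1) zero_le_power2[of "cmod (\<alpha> * u + \<beta> * v)"] by linarith
  have "0 < Re (Q (Suc (Suc n)))"
  proof (cases "v = 0")
    case True
    then show ?thesis
      using IH(2) by (simp add: ReQ)
  next
    case False
    then have "0 < (1 - g (Suc n)) * (cmod v)\<^sup>2"
      using g_Suc by simp
    with lower show ?thesis
      by linarith
  qed
  with lower show ?case
    by (simp add: v_def)
qed

lemma positive_chain_seq_pos:
  assumes "positive_chain_seq d" and "k \<ge> 2"
  shows "0 < d k"
proof -
  obtain g where g1: "0 \<le> g 1" "g 1 < 1" and g: "\<forall>n\<ge>2. 0 < g n \<and> g n < 1"
    and dg: "\<forall>n\<ge>1. d (n + 1) = (1 - g n) * g (n + 1)"
    using assms(1) unfolding positive_chain_seq_def by blast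
  define n where "n = k - 1"
  have n: "k = n + 1" "n \<ge> 1"
    using \<open>k \<ge> 2\<close> by (simp_all add: n_def)
  have "g n < 1"
    using g1 g[rule_format, of n] n(2) by (cases "n = 1") auto
  moreover have "0 < g (n + 1)"
    using g n(2) by simp
  ultimately show ?thesis
    using dg n by simp
qed

lemma Bform_diag_pos:
  assumes "positive_chain_seq d"
  shows "0 < Re (Bform c d (Suc m) x x)"
proof -
  obtain g where g1: "0 \<le> g 1" "g 1 < 1" and g: "\<forall>n\<ge>2. 0 < g n \<and> g n < 1"
    and dg: "\<forall>n\<ge>1. d (n + 1) = (1 - g n) * g (n + 1)"
    using assms unfolding positive_chain_seq_def by blast
  have "(\<lambda>k. complex_of_real (sqrt (d (k + 2))))
      = (\<lambda>k. complex_of_real (sqrt ((1 - g (Suc k)) * g (Suc (Suc k)))))"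
    using dg by (auto simp: numeral_2_eq_2)
  then have "Bform c d (Suc m) x x = tridiag_form
      (\<lambda>k. complex_of_real (sqrt ((1 - g (Suc k)) * g (Suc (Suc k))))) (Suc m)
      (\<lambda>k. cnj (uf c d k x)) (\<lambda>k. uf c d k x)"
    by (simp add: Bform_def)
  also have "0 < Re \<dots>"
    using tridiag_form_chain_lower_bound[where g = "\<lambda>k. g (Suc k)" and f = "\<lambda>k. uf c d k x"]
      g1 g by (simp add: uf_def)
  finally show ?thesis .
qed

theorem theorem3p1:
  fixes c d :: "nat \<Rightarrow> real"
  assumes chain: "positive_chain_seq d"
  shows "(\<forall>x y. x \<noteq> y \<longrightarrow> Gfun c d 1 x y = 1)
    \<and> (\<forall>n\<ge>2. \<forall>x y. x \<noteq> y \<longrightarrow>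
          complex_of_real (Gfun c d n x y) /
            ((complex_of_real x - \<i>)^(n-1) * (complex_of_real y + \<i>)^(n-1)
              * complex_of_real (\<Prod>j=2..n. d j))
          = conjugate (uvec c d n y) \<bullet> (Bmat d n *\<^sub>v uvec c d n x))
    \<and> (\<forall>n\<ge>2. \<forall>x.
          complex_of_real (Gcal c d n x / ((x^2 + 1)^(n-1) * (\<Prod>j=2..n. d j)))
            = conjugate (uvec c d n x) \<bullet> (Bmat d n *\<^sub>v uvec c d n x)
        \<and> Gcal c d n x / ((x^2 + 1)^(n-1) * (\<Prod>j=2..n. d j)) > 0)"
proof (intro conjI allI impI)
  have dpos: "\<forall>k\<ge>2. d k > 0"
    using positive_chain_seq_pos[OF chain] by blast
  show "Gfun c d 1 x y = 1" if "x \<noteq> y" for x y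
    using that by (rule Gfun_1)
  fix n :: nat
  assume "n \<ge> 2"
  then obtain m where n: "n = Suc m"
    by (cases n) auto
  show "complex_of_real (Gfun c d n x y) /
      ((complex_of_real x - \<i>)^(n-1) * (complex_of_real y + \<i>)^(n-1)
        * complex_of_real (\<Prod>j=2..n. d j))
      = conjugate (uvec c d n y) \<bullet> (Bmat d n *\<^sub>v uvec c d n x)" if "x \<noteq> y" for x y
    using Bform_Gfun[OF dpos that] by (simp add: n scalar_prod_Bmat_uvec power_mult_distrib)
  fix x :: real
  have "(complex_of_real x - \<i>) * (complex_of_real x + \<i>) = complex_of_real (x\<^sup>2 + 1)"
    by (simp add: complex_eq_iff power2_eq_square)
  then have Gcal_Bform: "complex_of_real (Gcal c d n x / ((x\<^sup>2 + 1) ^ (n - 1) * (\<Prod>j=2..n. d j)))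
      = Bform c d n x x"
    using Bform_Gcal[OF dpos, of c m x] by (simp add: n)
  then show "complex_of_real (Gcal c d n x / ((x\<^sup>2 + 1) ^ (n - 1) * (\<Prod>j=2..n. d j)))
      = conjugate (uvec c d n x) \<bullet> (Bmat d n *\<^sub>v uvec c d n x)"
    by (simp add: scalar_prod_Bmat_uvec)
  show "Gcal c d n x / ((x\<^sup>2 + 1) ^ (n - 1) * (\<Prod>j=2..n. d j)) > 0"
    using arg_cong[OF Gcal_Bform, of Re] Bform_diag_pos[OF chain, of c m x] by (simp add: n)
qed

end
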